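(* Let $n\ge 1$, $k\ge 1$ be integers, $d=\gcd(k,n)$, $n=td$, let $\lambda\in\mathbb{F}_{2^n}^*$ and $f(x)=Tr(\lambda x^{2^k+1})$ for $x\in\mathbb{F}_{2^n}$. Then $f$ is negabent if and only if $\lambda$ cannot be written as $$\frac{v_0^{2^{2k}+1}}{(v_0+v_1)^{2^k+1}}$$ for some $v_0\in\mathbb{F}_{2^n}\setminus\mathbb{F}_{2^d}$ with $v_1=v_0^{2^k}$.
   Context: $Tr=Tr_1^n:\mathbb{F}_{2^n}\to\mathbb{F}_2$ is the absolute trace. Fix a self-dual basis $\{\alpha_1,\dots,\alpha_n\}$ of $\mathbb{F}_{2^n}$ over $\mathbb{F}_2$ (i.e. $Tr(\alpha_i\alpha_j)=\delta_{ij}$) and identify $x=\sum x_i\alpha_i$ with $(x_1,\dots,x_n)\in\mathbb{F}_2^n$; let $wt(x)$ be the number of nonzero coordinates. For $f:\mathbb{F}_{2^n}\to\mathbb{F}_2$, $\mathcal{N}_f(\mu)=2^{-n/2}\sum_{x}(-1)^{f(x)+Tr(\mu x)}\,\mathrm{i}^{wt(x)}$ ($\mathrm{i}=\sqrt{-1}$), and $f$ is negabent if $|\mathcal{N}_f(\mu)|=1$ for all $\mu\in\mathbb{F}_{2^n}$. *)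

theory Defs
  imports Complex_Main
begin

text \<open>The field F_{2^n} is modelled by a finite field type 'a with CARD('a) = 2^n.
  Elements of F_2 inside 'a are 0 and 1.\<close>

definition tr :: "nat \<Rightarrow> 'a::field \<Rightarrow> 'a" where
  "tr n x = (\<Sum>i<n. x ^ (2 ^ i))"

definition self_dual_basis :: "nat \<Rightarrow> (nat \<Rightarrow> 'a::field) \<Rightarrow> bool" where
  "self_dual_basis n \<alpha> \<longleftrightarrow>
     (\<forall>i<n. \<forall>j<n. tr n (\<alpha> i * \<alpha> j) = (if i = j then 1 else 0))"

definition coords :: "nat \<Rightarrow> (nat \<Rightarrow> 'a::field) \<Rightarrow> 'a \<Rightarrow> nat \<Rightarrow> bool" where
  "coords n \<alpha> x = (THE c. (\<forall>i. n \<le> i \<longrightarrow> \<not> c i) \<and>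
                           x = (\<Sum>i<n. if c i then \<alpha> i else 0))"

definition wt :: "nat \<Rightarrow> (nat \<Rightarrow> 'a::field) \<Rightarrow> 'a \<Rightarrow> nat" where
  "wt n \<alpha> x = card {i. i < n \<and> coords n \<alpha> x i}"

text \<open>(-1)^b for b in F_2 (embedded in 'a).\<close>
definition sgn2 :: "'a::field \<Rightarrow> complex" where
  "sgn2 b = (if b = 0 then 1 else -1)"

definition nega_transform ::
  "nat \<Rightarrow> (nat \<Rightarrow> 'a::{field,finite}) \<Rightarrow> ('a \<Rightarrow> 'a) \<Rightarrow> 'a \<Rightarrow> complex" where
  "nega_transform n \<alpha> f \<mu> =
     (1 / complex_of_real (sqrt (2 ^ n))) *
       (\<Sum>x\<in>UNIV. sgn2 (f x + tr n (\<mu> * x)) * \<i> ^ (wt n \<alpha> x))"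

definition negabent :: "nat \<Rightarrow> (nat \<Rightarrow> 'a::{field,finite}) \<Rightarrow> ('a \<Rightarrow> 'a) \<Rightarrow> bool" where
  "negabent n \<alpha> f \<longleftrightarrow> (\<forall>\<mu>. cmod (nega_transform n \<alpha> f \<mu>) = 1)"

end

theory Submission
  imports Defs
begin

text \<open>Squaring the nega-Hadamard transform of f(x) = Tr(lam x^(2^k+1)) and substituting
  y = x + a, the weight factors i^wt(x) (-i)^wt(x+a) combine to (-i)^wt(a) (-1)^Tr(xa) because
  the basis is self-dual, and the remaining dependence on x is the character of L(a) x^(2^k) for
  the linearized polynomial L(a) = lam a + lam^(2^k) a^(2^2k) + a^(2^k).  Hence |N(mu)|^2 is the
  Fourier transform of a function supported on the kernel of L with value 1 at a = 0, so by
  Fourier inversion it is 1 for every mu iff L has no nonzero root.  Nonzero roots of L match the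
  excluded values of lam: for v0 outside the subfield, a = (v0 + v1)/(v0 v1) is a root; conversely,
  for a root a and s with s^2 = lam a^(2^k+1), w = a + s satisfies w^(2^k) = s, and v0 = 1/w.\<close>

lemma power_card_UNIV_eq_self:
  fixes x :: "'a::{field,finite}"
  shows "x ^ card (UNIV :: 'a set) = x"
proof (cases "x = 0")
  case True
  have "card (UNIV :: 'a set) \<noteq> 0" by simp
  then show ?thesis using True by (simp add: power_0_left)
next
  case False
  let ?U = "UNIV - {0::'a}"
  have "bij_betw ((*) x) ?U ?U"
    by (rule bij_betw_byWitness[where f' = "\<lambda>y. y / x"])
      (use False in \<open>simp_all add: image_subset_iff\<close>)
  from prod.reindex_bij_betw[OF this, of "\<lambda>y. y"]
  have "(\<Prod>y\<in>?U. x * y) = (\<Prod>y\<in>?U. y)" by simp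
  moreover have "(\<Prod>y\<in>?U. x * y) = x ^ card ?U * (\<Prod>y\<in>?U. y)"
    by (simp add: prod.distrib)
  moreover have "(\<Prod>y\<in>?U. y) \<noteq> 0" by simp
  ultimately have "x ^ card ?U = 1" by simp
  moreover have "card (UNIV :: 'a set) = Suc (card ?U)"
    using card_Suc_Diff1[of "UNIV :: 'a set" 0] by simp
  ultimately show ?thesis by (metis power_Suc2 mult_1_left)
qed

lemma card_UNIV_field_ge_two: "card (UNIV :: 'a::{field,finite} set) \<ge> 2"
  by (metis card_2_iff card_mono finite_UNIV subset_UNIV zero_neq_one)

lemma power_two_pow_fixed_mult:
  fixes x :: "'a::monoid_mult"
  assumes "x ^ 2 ^ m = x"
  shows "x ^ 2 ^ (m * j) = x"
proof (induction j)
  case (Suc j)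
  have "x ^ 2 ^ (m * Suc j) = (x ^ 2 ^ (m * j)) ^ 2 ^ m"
    by (simp add: power_add power_mult[symmetric] mult.commute)
  then show ?case using Suc assms by simp
qed simp

lemma power_two_pow_fixed_dvd:
  fixes x :: "'a::monoid_mult"
  assumes "d dvd m" "x ^ 2 ^ d = x"
  shows "x ^ 2 ^ m = x"
  using assms power_two_pow_fixed_mult by (metis dvd_def)

lemma power_two_pow_fixed_gcd:
  fixes x :: "'a::monoid_mult"
  shows "x ^ 2 ^ a = x \<Longrightarrow> x ^ 2 ^ b = x \<Longrightarrow> x ^ 2 ^ gcd a b = x"
proof (induction a b rule: gcd_nat_induct)
  case (step a b)
  have "x ^ 2 ^ (a mod b) = (x ^ 2 ^ (b * (a div b))) ^ 2 ^ (a mod b)"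
    using power_two_pow_fixed_mult[OF step(4)] by simp
  also have "\<dots> = x ^ 2 ^ a"
    by (metis div_mult_mod_eq mult.commute power_add power_mult)
  finally have "x ^ 2 ^ (a mod b) = x" using step(3) by simp
  then show ?case using step by (simp add: gcd_non_0_nat)
qed simp

lemma i_pow_times_minus_i_pow:
  assumes "u + 2 * c = v + w"
  shows "\<i> ^ v * (-\<i>) ^ u = (-\<i>) ^ w * (-1) ^ c"
proof -
  have "\<i> ^ v * (-\<i>) ^ u = \<i> ^ (v + 2 * c) * (-\<i>) ^ (u + 2 * c)"
    by (simp add: power_add power_mult)
  also have "\<dots> = (\<i> ^ v * (-\<i>) ^ v) * (-\<i>) ^ w * \<i> ^ (2 * c)"
    unfolding assms by (simp add: power_add mult_ac)
  also have "\<dots> = (-\<i>) ^ w * (-1) ^ c"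
    by (simp add: power_mult flip: power_mult_distrib)
  finally show ?thesis .
qed

lemma cmod_eq_1_iff: "cmod z = 1 \<longleftrightarrow> z * cnj z = 1"
proof -
  have "z * cnj z = 1 \<longleftrightarrow> (cmod z)\<^sup>2 = 1"
    by (metis complex_norm_square of_real_1 of_real_eq_iff)
  also have "\<dots> \<longleftrightarrow> cmod z = 1"
    by (smt (verit) norm_ge_zero power2_eq_1_iff)
  finally show ?thesis ..
qed

lemma char_two_fraction_identity:
  fixes x0 x1 x2 x3 :: "'a::field"
  assumes two: "(2::'a) = 0"
    and "x0 \<noteq> 0" "x1 \<noteq> 0" "x2 \<noteq> 0" "x3 \<noteq> 0"
    and "x0 + x1 \<noteq> 0" "x1 + x2 \<noteq> 0" "x2 + x3 \<noteq> 0"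
  shows "x0 * x2 / ((x0 + x1) * (x1 + x2)) * ((x0 + x1) / (x0 * x1))
       + x1 * x3 / ((x1 + x2) * (x2 + x3)) * ((x2 + x3) / (x2 * x3))
       + (x1 + x2) / (x1 * x2) = 0"
proof -
  have "x0 * x2 / ((x0 + x1) * (x1 + x2)) * ((x0 + x1) / (x0 * x1)) = x2 / (x1 * (x1 + x2))"
    "x1 * x3 / ((x1 + x2) * (x2 + x3)) * ((x2 + x3) / (x2 * x3)) = x1 / (x2 * (x1 + x2))"
    using assms by (simp_all add: divide_simps)
  moreover have "(x2 / (x1 * (x1 + x2)) + x1 / (x2 * (x1 + x2)) + (x1 + x2) / (x1 * x2))
      * (x1 * x2 * (x1 + x2)) = x2 * x2 + x1 * x1 + (x1 + x2) * (x1 + x2)"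
    using assms(2-) by (simp add: divide_simps)
  moreover have "x2 * x2 + x1 * x1 + (x1 + x2) * (x1 + x2) = 2 * (x1 * x1 + x2 * x2 + x1 * x2)"
    by algebra
  ultimately show ?thesis
    using assms by (simp add: two ac_simps)
qed

definition gold_linearized :: "'a::field \<Rightarrow> nat \<Rightarrow> 'a \<Rightarrow> 'a" where
  "gold_linearized lam k a = lam * a + lam ^ 2 ^ k * (a ^ 2 ^ k) ^ 2 ^ k + a ^ 2 ^ k"

definition gold_param :: "nat \<Rightarrow> 'a::field \<Rightarrow> 'a" where
  "gold_param k v = v ^ (2 ^ (2 * k) + 1) / (v + v ^ 2 ^ k) ^ (2 ^ k + 1)"

locale binary_field =
  fixes n :: nat
  assumes card_UNIV_eq: "card (UNIV :: 'a::{field,finite} set) = 2 ^ n"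
begin

lemma frobenius_fixes: "(x::'a) ^ 2 ^ n = x"
  using power_card_UNIV_eq_self[of x] card_UNIV_eq by simp

lemma n_gt_0: "0 < n"
proof -
  have "2 \<le> (2::nat) ^ n"
    using card_UNIV_field_ge_two[where 'a = 'a] card_UNIV_eq by simp
  then show ?thesis by (cases n) simp_all
qed

lemma char_two: "(2::'a) = 0"
proof -
  have "even ((2::nat) ^ n)" using n_gt_0 by simp
  then have "(1::'a) = -1"
    using frobenius_fixes[of "-1"] by simp
  then have "(1::'a) + 1 = 1 + -1" by simp
  then show ?thesis by simp
qed

lemma add_self_eq_0 [simp]: "(x::'a) + x = 0"
  by (metis char_two mult_2 mult_zero_left)


lemma add_eq_0_iff_eq: "(x::'a) + y = 0 \<longleftrightarrow> x = y"
  by (metis add_self_eq_0 add.left_neutral add.assoc)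

lemma frobenius_add: "((x::'a) + y) ^ 2 ^ m = x ^ 2 ^ m + y ^ 2 ^ m"
proof (induction m)
  case (Suc m)
  have "(x + y) ^ 2 ^ Suc m = ((x + y) ^ 2 ^ m)\<^sup>2"
    by (simp add: power_mult[symmetric] mult.commute)
  also have "\<dots> = (x ^ 2 ^ m)\<^sup>2 + (y ^ 2 ^ m)\<^sup>2"
    unfolding Suc by (simp add: power2_sum char_two)
  finally show ?case
    by (simp add: power_mult[symmetric] mult.commute)
qed simp

lemma frobenius_sum: "(\<Sum>i\<in>A. f i :: 'a) ^ 2 ^ m = (\<Sum>i\<in>A. f i ^ 2 ^ m)"
  by (induction A rule: infinite_finite_induct) (simp_all add: frobenius_add)

lemma inj_frobenius: "inj (\<lambda>x::'a. x ^ 2 ^ m)"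
proof (rule injI)
  fix x y :: 'a
  assume "x ^ 2 ^ m = y ^ 2 ^ m"
  then have "(x + y) ^ 2 ^ m = 0" by (simp add: frobenius_add)
  then show "x = y" by (simp add: add_eq_0_iff_eq)
qed

lemma bij_frobenius: "bij (\<lambda>x::'a. x ^ 2 ^ m)"
  using inj_frobenius finite_UNIV_inj_surj[OF _ inj_frobenius] by (simp add: bij_def)

lemma frobenius_fixed_gcd_iff: "(x::'a) ^ 2 ^ gcd k n = x \<longleftrightarrow> x ^ 2 ^ k = x"
proof
  show "x ^ 2 ^ gcd k n = x \<Longrightarrow> x ^ 2 ^ k = x"
    by (rule power_two_pow_fixed_dvd[OF gcd_dvd1])
  show "x ^ 2 ^ k = x \<Longrightarrow> x ^ 2 ^ gcd k n = x"
    using power_two_pow_fixed_gcd frobenius_fixes by blast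
qed

lemma tr_add: "tr n (x + y) = tr n x + tr n (y::'a)"
  unfolding tr_def by (simp add: frobenius_add sum.distrib)

lemma tr_0 [simp]: "tr n (0::'a) = 0"
  unfolding tr_def by (simp add: power_0_left)

lemma tr_sum: "tr n (\<Sum>i\<in>A. f i) = (\<Sum>i\<in>A. tr n (f i::'a))"
  by (induction A rule: infinite_finite_induct) (simp_all add: tr_add)

lemma tr_square: "tr n ((x::'a)\<^sup>2) = tr n x"
proof -
  have "x + tr n (x\<^sup>2) = (\<Sum>i<Suc n. x ^ 2 ^ i)"
    unfolding tr_def sum.lessThan_Suc_shift by (simp add: power_mult[symmetric] mult.commute)
  also have "\<dots> = tr n x + x"
    unfolding tr_def sum.lessThan_Suc by (simp add: frobenius_fixes)
  finally show ?thesis by (metis add.commute add_left_cancel)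
qed

lemma tr_frobenius: "tr n ((x::'a) ^ 2 ^ m) = tr n x"
proof (induction m)
  case (Suc m)
  have "x ^ 2 ^ Suc m = (x ^ 2 ^ m)\<^sup>2"
    by (simp add: power_mult[symmetric] mult.commute)
  then show ?case using Suc tr_square by simp
qed simp

lemma tr_cases: "tr n (x::'a) = 0 \<or> tr n x = 1"
proof -
  have "(tr n x) ^ 2 ^ 1 = tr n (x\<^sup>2)"
    unfolding tr_def frobenius_sum by (simp add: power_mult[symmetric] mult.commute)
  then have "(tr n x)\<^sup>2 = tr n x"
    using tr_square by simp
  then have "tr n x * (tr n x - 1) = 0"
    by (simp add: power2_eq_square algebra_simps)
  then show ?thesis by auto
qed

definition chi :: "'a \<Rightarrow> complex" where
  "chi x = sgn2 (tr n x)"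

lemma chi_add: "chi (x + y) = chi x * chi y"
  unfolding chi_def sgn2_def tr_add using tr_cases[of x] tr_cases[of y] by auto

lemma chi_0 [simp]: "chi 0 = 1"
  unfolding chi_def sgn2_def by simp

lemma chi_cases: "chi x = 1 \<or> chi x = -1"
  unfolding chi_def sgn2_def by auto

lemma cnj_chi [simp]: "cnj (chi x) = chi x"
  using chi_cases[of x] by auto

lemma chi_frobenius: "chi (x ^ 2 ^ m) = chi x"
  unfolding chi_def tr_frobenius ..

lemma gold_param_eq:
  "gold_param k (v::'a) = v * (v ^ 2 ^ k) ^ 2 ^ k / ((v + v ^ 2 ^ k) * (v ^ 2 ^ k + (v ^ 2 ^ k) ^ 2 ^ k))"
proof -
  have "(2::nat) ^ (2 * k) = 2 ^ k * 2 ^ k" by (simp add: mult_2 power_add)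
  then have numerator: "v ^ (2 ^ (2 * k) + 1) = v * (v ^ 2 ^ k) ^ 2 ^ k"
    by (simp add: power_mult)
  have denominator:
    "(v + v ^ 2 ^ k) ^ (2 ^ k + 1) = (v + v ^ 2 ^ k) * (v ^ 2 ^ k + (v ^ 2 ^ k) ^ 2 ^ k)"
    by (simp add: frobenius_add)
  show ?thesis
    unfolding gold_param_def numerator denominator ..
qed

lemma gold_linearized_root_of_param:
  fixes v0 :: 'a
  assumes v0: "v0 ^ 2 ^ k \<noteq> v0"
  defines "a \<equiv> (v0 + v0 ^ 2 ^ k) / (v0 * v0 ^ 2 ^ k)"
  shows "a \<noteq> 0" and "gold_linearized (gold_param k v0) k a = 0"
proof -
  let ?q = "2 ^ k :: nat"
  define x1 where "x1 = v0 ^ ?q"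
  define x2 where "x2 = x1 ^ ?q"
  define x3 where "x3 = x2 ^ ?q"
  have "v0 \<noteq> 0" using v0 by (auto simp: power_0_left)
  then have nz: "v0 \<noteq> 0" "x1 \<noteq> 0" "x2 \<noteq> 0" "x3 \<noteq> 0"
    unfolding x1_def x2_def x3_def by simp_all
  have s12: "x1 + x2 = (v0 + x1) ^ ?q"
    unfolding x2_def x1_def frobenius_add ..
  have s23: "x2 + x3 = (x1 + x2) ^ ?q"
    unfolding x3_def x2_def frobenius_add ..
  have s01: "v0 + x1 \<noteq> 0" using v0 unfolding x1_def add_eq_0_iff_eq by auto
  then have nz_sums: "v0 + x1 \<noteq> 0" "x1 + x2 \<noteq> 0" "x2 + x3 \<noteq> 0"
    unfolding s12 s23 by simp_all
  show "a \<noteq> 0" using s01 nz unfolding a_def x1_def by simp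
  have lam: "gold_param k v0 = v0 * x2 / ((v0 + x1) * (x1 + x2))"
    unfolding gold_param_eq x2_def x1_def ..
  have aq: "a ^ ?q = (x1 + x2) / (x1 * x2)"
    unfolding a_def power_divide power_mult_distrib
    unfolding s12[symmetric] x1_def[symmetric] x2_def[symmetric] ..
  have aqq: "(a ^ ?q) ^ ?q = (x2 + x3) / (x2 * x3)"
    unfolding aq power_divide power_mult_distrib
    unfolding s23[symmetric] x2_def[symmetric] x3_def[symmetric] ..
  have lq: "(v0 * x2 / ((v0 + x1) * (x1 + x2))) ^ ?q = x1 * x3 / ((x1 + x2) * (x2 + x3))"
    unfolding power_divide power_mult_distrib
    unfolding s12[symmetric] s23[symmetric] x1_def[symmetric] x2_def[symmetric] x3_def[symmetric] ..
  have "gold_linearized (gold_param k v0) k a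
      = v0 * x2 / ((v0 + x1) * (x1 + x2)) * ((v0 + x1) / (v0 * x1))
      + x1 * x3 / ((x1 + x2) * (x2 + x3)) * ((x2 + x3) / (x2 * x3))
      + (x1 + x2) / (x1 * x2)"
    unfolding lam gold_linearized_def aqq unfolding aq lq unfolding a_def x1_def ..
  then show "gold_linearized (gold_param k v0) k a = 0"
    using char_two_fraction_identity[OF char_two nz nz_sums] by simp
qed

lemma gold_linearized_root_frobenius:
  fixes lam a s :: 'a
  assumes "gold_linearized lam k a = 0" and s: "s\<^sup>2 = lam * a ^ (2 ^ k + 1)"
  shows "(a + s) ^ 2 ^ k = s"
proof -
  let ?q = "2 ^ k :: nat"
  have "lam * a ^ (?q + 1) + (lam ^ ?q * (a ^ ?q) ^ ?q * a ^ ?q + (a ^ ?q)\<^sup>2)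
      = a ^ ?q * gold_linearized lam k a"
    unfolding gold_linearized_def by (simp add: algebra_simps power2_eq_square)
  then have lin: "lam * a ^ (?q + 1) = lam ^ ?q * (a ^ ?q) ^ ?q * a ^ ?q + (a ^ ?q)\<^sup>2"
    using assms(1) by (metis add_eq_0_iff_eq mult_zero_right)
  have "((a + s) ^ ?q)\<^sup>2 = (a ^ ?q)\<^sup>2 + (s\<^sup>2) ^ ?q"
    using frobenius_add[of "a ^ ?q" "s ^ ?q" 1] frobenius_add[of a s k]
    by (simp add: power_mult[symmetric] mult.commute)
  also have "(s\<^sup>2) ^ ?q = lam ^ ?q * (a ^ ?q) ^ ?q * a ^ ?q"
    unfolding s by (simp add: power_mult_distrib)
  also have "(a ^ ?q)\<^sup>2 + lam ^ ?q * (a ^ ?q) ^ ?q * a ^ ?q = s\<^sup>2"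
    unfolding s lin by (simp add: add.commute)
  finally show ?thesis
    using injD[OF inj_frobenius[of 1]] by simp
qed

lemma gold_param_of_linearized_root:
  fixes lam a :: 'a
  assumes a: "a \<noteq> 0" and root: "gold_linearized lam k a = 0"
  shows "\<exists>v0. v0 ^ 2 ^ k \<noteq> v0 \<and> lam = gold_param k v0"
proof -
  let ?q = "2 ^ k :: nat"
  obtain s where s: "s\<^sup>2 = lam * a ^ (?q + 1)"
    using surjD[OF bij_is_surj[OF bij_frobenius[of 1]]] by (metis power_one_right)
  define w where "w = a + s"
  define t where "t = s ^ ?q"
  have wq: "w ^ ?q = s"
    unfolding w_def using gold_linearized_root_frobenius[OF root s] .
  have aw: "a = w + s" unfolding w_def by (simp add: add.assoc)
  have aq: "a ^ ?q = s + t" unfolding aw frobenius_add wq t_def ..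
  have ws: "w \<noteq> s" using a aw by auto
  have nz: "s \<noteq> 0" "t \<noteq> 0" "w \<noteq> 0" "s + t \<noteq> 0"
    using a aw wq aq ws by (auto simp: t_def power_0_left)
  define v0 where "v0 = 1 / w"
  have v0q: "v0 ^ ?q = 1 / s" and v0qq: "(1 / s) ^ ?q = 1 / t"
    unfolding v0_def t_def power_divide wq by simp_all
  have "v0 ^ ?q \<noteq> v0" unfolding v0q using ws by (simp add: v0_def)
  moreover have "lam = gold_param k v0"
  proof -
    have "lam = s\<^sup>2 / ((s + t) * (w + s))"
      using s a unfolding aq[symmetric] aw[symmetric] by (simp add: field_simps)
    also have "\<dots> = (1/w) * (1/t) / ((1/w + 1/s) * (1/s + 1/t))"
      using nz by (simp add: field_simps power2_eq_square)
    also have "\<dots> = gold_param k v0"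
      unfolding gold_param_eq v0q v0qq by (simp add: v0_def)
    finally show ?thesis .
  qed
  ultimately show ?thesis by blast
qed

lemma gold_linearized_nonzero_root_iff:
  fixes lam :: 'a
  shows "(\<exists>a. a \<noteq> 0 \<and> gold_linearized lam k a = 0) \<longleftrightarrow>
     (\<exists>v0. v0 ^ 2 ^ gcd k n \<noteq> v0 \<and> lam = gold_param k v0)"
  using gold_linearized_root_of_param gold_param_of_linearized_root frobenius_fixed_gcd_iff
  by metis

end

locale self_dual_field = binary_field n for n +
  fixes \<alpha> :: "nat \<Rightarrow> 'a::{field,finite}"
  assumes self_dual: "self_dual_basis n \<alpha>"
begin

lemma tr_basis_mult: "i < n \<Longrightarrow> j < n \<Longrightarrow> tr n (\<alpha> i * \<alpha> j) = (if i = j then 1 else 0)"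
  using self_dual unfolding self_dual_basis_def by blast

lemma sum_chi_UNIV: "(\<Sum>z\<in>UNIV. chi z) = 0"
proof -
  let ?z0 = "\<alpha> 0 * \<alpha> 0"
  have "chi ?z0 = -1"
    using tr_basis_mult[of 0 0] n_gt_0 unfolding chi_def sgn2_def by simp
  have "bij_betw (\<lambda>z. z + ?z0) UNIV UNIV"
    by (rule bij_betw_byWitness[where f' = "\<lambda>z. z - ?z0"]) auto
  from sum.reindex_bij_betw[OF this, of chi]
  have "(\<Sum>z\<in>UNIV. chi z) = (\<Sum>z\<in>UNIV. chi (z + ?z0))" by simp
  also have "\<dots> = - (\<Sum>z\<in>UNIV. chi z)"
    by (simp add: chi_add \<open>chi ?z0 = -1\<close> sum_negf)
  finally show ?thesis by simp
qed

lemma sum_chi_mult: "(\<Sum>z\<in>UNIV. chi (e * z)) = (if e = 0 then of_nat (2 ^ n) else 0)"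
proof (cases "e = 0")
  case True
  then show ?thesis using card_UNIV_eq by simp
next
  case False
  have "bij_betw ((*) e) UNIV UNIV"
    by (rule bij_betw_byWitness[where f' = "\<lambda>z. z / e"]) (use False in auto)
  from sum.reindex_bij_betw[OF this, of chi]
  have "(\<Sum>z\<in>UNIV. chi (e * z)) = (\<Sum>z\<in>UNIV. chi z)" by simp
  then show ?thesis using False sum_chi_UNIV by simp
qed

lemma sum_chi_inversion:
  "(\<Sum>\<mu>\<in>UNIV. (\<Sum>a\<in>A. w a * chi (a * \<mu>)) * chi (b * \<mu>))
     = (if b \<in> A then of_nat (2 ^ n) * w b else 0)"
proof -
  have "(\<Sum>\<mu>\<in>UNIV. (\<Sum>a\<in>A. w a * chi (a * \<mu>)) * chi (b * \<mu>))
      = (\<Sum>a\<in>A. w a * (\<Sum>\<mu>\<in>UNIV. chi ((a + b) * \<mu>)))"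
    unfolding sum_distrib_right sum_distrib_left distrib_right chi_add
    by (subst sum.swap) (simp add: mult.assoc)
  also have "\<dots> = (\<Sum>a\<in>A. if a = b then of_nat (2 ^ n) * w b else 0)"
    by (rule sum.cong) (auto simp: sum_chi_mult add_eq_0_iff_eq)
  also have "\<dots> = (if b \<in> A then of_nat (2 ^ n) * w b else 0)"
    by (cases "finite A") (simp_all add: sum.delta')
  finally show ?thesis .
qed

text \<open>By self-duality the j-th coordinate of x is Tr(x \<alpha>_j), so coord_supp x is the
  support of the coordinate vector of x.\<close>

definition coord_supp :: "'a \<Rightarrow> nat set" where
  "coord_supp x = {j. j < n \<and> tr n (x * \<alpha> j) = 1}"

definition basis_sum :: "nat set \<Rightarrow> 'a" where
  "basis_sum T = (\<Sum>i\<in>T. \<alpha> i)"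

lemma coord_supp_subset: "coord_supp x \<subseteq> {..<n}"
  unfolding coord_supp_def by auto

lemma finite_coord_supp [simp]: "finite (coord_supp x)"
  using coord_supp_subset finite_subset by blast

lemma coord_supp_basis_sum:
  assumes "T \<subseteq> {..<n}"
  shows "coord_supp (basis_sum T) = T"
proof -
  have "tr n (basis_sum T * \<alpha> j) = (if j \<in> T then 1 else 0)" if "j < n" for j
  proof -
    have "tr n (basis_sum T * \<alpha> j) = (\<Sum>i\<in>T. tr n (\<alpha> i * \<alpha> j))"
      unfolding basis_sum_def sum_distrib_right tr_sum ..
    also have "\<dots> = (\<Sum>i\<in>T. if i = j then 1 else 0)"
      by (rule sum.cong) (use assms that tr_basis_mult in auto)
    finally show ?thesis
      using finite_subset[OF assms] by simp
  qed
  then show ?thesis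
    unfolding coord_supp_def using assms by (auto split: if_splits)
qed

lemma basis_sum_coord_supp: "basis_sum (coord_supp x) = x"
proof -
  have "inj_on basis_sum (Pow {..<n})"
    by (rule inj_onI) (metis PowD coord_supp_basis_sum)
  then have "card (basis_sum ` Pow {..<n}) = card (UNIV :: 'a set)"
    using card_UNIV_eq by (simp add: card_image card_Pow)
  then have "basis_sum ` Pow {..<n} = UNIV"
    by (simp add: card_eq_UNIV_imp_eq_UNIV)
  then obtain T where "T \<subseteq> {..<n}" "x = basis_sum T"
    by (metis PowD UNIV_I imageE)
  then show ?thesis using coord_supp_basis_sum by simp
qed

lemma coords_eq_coord_supp: "coords n \<alpha> x = (\<lambda>i. i \<in> coord_supp x)"
  unfolding coords_def
proof (rule the_equality)
  have "(\<Sum>i<n. if i \<in> coord_supp x then \<alpha> i else 0) = basis_sum (coord_supp x)"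
    unfolding basis_sum_def sum.inter_restrict[OF finite_lessThan, symmetric]
    using coord_supp_subset by (metis inf.absorb2)
  then show "(\<forall>i. n \<le> i \<longrightarrow> i \<notin> coord_supp x) \<and>
      x = (\<Sum>i<n. if i \<in> coord_supp x then \<alpha> i else 0)"
    using coord_supp_subset basis_sum_coord_supp by force
next
  fix c
  assume c: "(\<forall>i. n \<le> i \<longrightarrow> \<not> c i) \<and> x = (\<Sum>i<n. if c i then \<alpha> i else 0)"
  let ?T = "{i. i < n \<and> c i}"
  have "(\<Sum>i<n. if c i then \<alpha> i else 0) = (\<Sum>i\<in>{..<n} \<inter> {i. c i}. \<alpha> i)"
    by (simp add: sum.inter_restrict)
  also have "{..<n} \<inter> {i. c i} = ?T" by auto
  finally have "(\<Sum>i<n. if c i then \<alpha> i else 0) = basis_sum ?T"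
    unfolding basis_sum_def .
  then have "coord_supp x = ?T"
    using c coord_supp_basis_sum[of ?T] by auto
  then show "c = (\<lambda>i. i \<in> coord_supp x)"
    using c by (auto simp: fun_eq_iff not_less)
qed

lemma wt_eq_card_coord_supp: "wt n \<alpha> x = card (coord_supp x)"
  unfolding wt_def coords_eq_coord_supp coord_supp_def by simp

lemma wt_0 [simp]: "wt n \<alpha> 0 = 0"
  unfolding wt_eq_card_coord_supp coord_supp_def by simp

lemma coord_supp_add:
  "coord_supp (x + y) = (coord_supp x - coord_supp y) \<union> (coord_supp y - coord_supp x)"
proof -
  have "b + c = 1 \<longleftrightarrow> (b = 1) \<noteq> (c = 1)" if "b = 0 \<or> b = 1" "c = 0 \<or> c = (1::'a)" for b c
    using that by auto
  then show ?thesis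
    unfolding coord_supp_def distrib_right tr_add using tr_cases by auto
qed

lemma card_coord_supp_add:
  "card (coord_supp (x + y)) + 2 * card (coord_supp x \<inter> coord_supp y)
     = card (coord_supp x) + card (coord_supp y)"
proof -
  let ?X = "coord_supp x" and ?Y = "coord_supp y"
  have "card ?X = card (?X - ?Y) + card (?X \<inter> ?Y)"
    "card ?Y = card (?Y - ?X) + card (?X \<inter> ?Y)"
    by (metis Diff_Diff_Int Diff_disjoint Un_Diff_Int card_Un_disjoint finite_Diff finite_Int
        finite_coord_supp Int_commute)+
  moreover have "card (coord_supp (x + y)) = card (?X - ?Y) + card (?Y - ?X)"
    unfolding coord_supp_add by (rule card_Un_disjoint) auto
  ultimately show ?thesis by simp
qed

lemma tr_mult_eq_card_inter: "tr n (x * y) = of_nat (card (coord_supp x \<inter> coord_supp y))"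
proof -
  have "tr n (x * y) = (\<Sum>i\<in>coord_supp y. tr n (x * \<alpha> i))"
    using basis_sum_coord_supp[of y] unfolding basis_sum_def by (metis sum_distrib_left tr_sum)
  also have "\<dots> = (\<Sum>i\<in>coord_supp y. if i \<in> coord_supp x then 1 else 0)"
    by (rule sum.cong) (use tr_cases in \<open>auto simp: coord_supp_def\<close>)
  also have "\<dots> = of_nat (card (coord_supp x \<inter> coord_supp y))"
    by (simp add: sum.If_cases Int_commute)
  finally show ?thesis .
qed

lemma of_nat_char_two: "(of_nat m :: 'a) = (if even m then 0 else 1)"
  by (induction m) auto

lemma chi_mult: "chi (x * y) = (-1) ^ card (coord_supp x \<inter> coord_supp y)"
  unfolding chi_def tr_mult_eq_card_inter of_nat_char_two sgn2_def by auto

lemma i_pow_wt_mult_minus_i_pow_wt: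
  "\<i> ^ wt n \<alpha> x * (-\<i>) ^ wt n \<alpha> (x + a) = (-\<i>) ^ wt n \<alpha> a * chi (x * a)"
  unfolding chi_mult wt_eq_card_coord_supp
  by (rule i_pow_times_minus_i_pow) (use card_coord_supp_add[of x a] in simp)

context
  fixes lam :: 'a and k :: nat
begin

definition nega_term :: "'a \<Rightarrow> 'a \<Rightarrow> complex" where
  "nega_term \<mu> x = chi (lam * x ^ (2 ^ k + 1) + \<mu> * x) * \<i> ^ wt n \<alpha> x"

definition autocorr_weight :: "'a \<Rightarrow> complex" where
  "autocorr_weight a = chi (lam * a ^ (2 ^ k + 1)) * (-\<i>) ^ wt n \<alpha> a"

lemma nega_transform_gold:
  "nega_transform n \<alpha> (\<lambda>x. tr n (lam * x ^ (2 ^ k + 1))) \<mu>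
     = (1 / complex_of_real (sqrt (2 ^ n))) * (\<Sum>x\<in>UNIV. nega_term \<mu> x)"
  unfolding nega_transform_def nega_term_def chi_def tr_add[symmetric] ..

lemma gold_shift_identity:
  "(lam * x ^ (2 ^ k + 1) + \<mu> * x) + (lam * (x + a) ^ (2 ^ k + 1) + \<mu> * (x + a)) + x * a
     = (lam * a ^ (2 ^ k + 1) + \<mu> * a) + (lam * a * x ^ 2 ^ k + (lam * a ^ 2 ^ k + a) * x)"
proof -
  have expand: "\<And>X A :: 'a.
      (lam * (X * x) + \<mu> * x) + (lam * ((X + A) * (x + a)) + \<mu> * (x + a)) + x * a
      = (lam * (A * a) + \<mu> * a) + (lam * a * X + (lam * A + a) * x) + 2 * (lam * X * x + \<mu> * x)"
    by algebra
  have powers: "(x + a) ^ (2 ^ k + 1) = (x ^ 2 ^ k + a ^ 2 ^ k) * (x + a)"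
    "x ^ (2 ^ k + 1) = x ^ 2 ^ k * x" "a ^ (2 ^ k + 1) = a ^ 2 ^ k * a"
    by (simp_all add: frobenius_add)
  show ?thesis
    unfolding powers expand char_two by simp
qed

text \<open>Frobenius invariance of the trace moves the term linear in x onto x^(2^k).\<close>

lemma chi_gold_linear_part:
  "chi (lam * a * x ^ 2 ^ k + (lam * a ^ 2 ^ k + a) * x) = chi (gold_linearized lam k a * x ^ 2 ^ k)"
proof -
  have "chi ((lam * a ^ 2 ^ k + a) * x) = chi (((lam * a ^ 2 ^ k + a) * x) ^ 2 ^ k)"
    by (rule chi_frobenius[symmetric])
  also have "\<dots> = chi ((lam ^ 2 ^ k * (a ^ 2 ^ k) ^ 2 ^ k + a ^ 2 ^ k) * x ^ 2 ^ k)"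
    by (simp add: frobenius_add power_mult_distrib)
  finally show ?thesis
    unfolding gold_linearized_def by (simp add: chi_add algebra_simps)
qed

lemma nega_term_mult_cnj_shift:
  "nega_term \<mu> x * cnj (nega_term \<mu> (x + a))
     = autocorr_weight a * chi (a * \<mu>) * chi (gold_linearized lam k a * x ^ 2 ^ k)"
proof -
  have "nega_term \<mu> x * cnj (nega_term \<mu> (x + a))
      = chi (lam * x ^ (2 ^ k + 1) + \<mu> * x) * chi (lam * (x + a) ^ (2 ^ k + 1) + \<mu> * (x + a))
        * (\<i> ^ wt n \<alpha> x * (-\<i>) ^ wt n \<alpha> (x + a))"
    unfolding nega_term_def by (simp add: complex_cnj_power mult_ac)
  also have "\<dots> = chi ((lam * x ^ (2 ^ k + 1) + \<mu> * x)
        + (lam * (x + a) ^ (2 ^ k + 1) + \<mu> * (x + a)) + x * a) * (-\<i>) ^ wt n \<alpha> a"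
    unfolding i_pow_wt_mult_minus_i_pow_wt chi_add by (simp add: mult_ac)
  also have "\<dots> = autocorr_weight a * chi (a * \<mu>) * chi (gold_linearized lam k a * x ^ 2 ^ k)"
    unfolding gold_shift_identity chi_add chi_gold_linear_part[symmetric] autocorr_weight_def
    by (simp add: mult_ac)
  finally show ?thesis .
qed

lemma nega_sum_mult_cnj:
  "(\<Sum>x\<in>UNIV. nega_term \<mu> x) * cnj (\<Sum>x\<in>UNIV. nega_term \<mu> x)
     = of_nat (2 ^ n) * (\<Sum>a\<in>{a. gold_linearized lam k a = 0}. autocorr_weight a * chi (a * \<mu>))"
proof -
  have shift: "(\<Sum>y\<in>UNIV. f y) = (\<Sum>a\<in>UNIV. f (x + a))" for f :: "'a \<Rightarrow> complex" and x
    by (rule sum.reindex_bij_witness[where i = "\<lambda>y. y - x" and j = "\<lambda>a. x + a"])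
      (auto simp: char_two)
  have frob: "(\<Sum>x\<in>UNIV. chi (e * x ^ 2 ^ k)) = (\<Sum>z\<in>UNIV. chi (e * z))" for e
    using sum.reindex_bij_betw[OF bij_frobenius[of k], of "\<lambda>z. chi (e * z)"] by simp
  have "(\<Sum>x\<in>UNIV. nega_term \<mu> x) * cnj (\<Sum>x\<in>UNIV. nega_term \<mu> x)
      = (\<Sum>x\<in>UNIV. \<Sum>a\<in>UNIV. nega_term \<mu> x * cnj (nega_term \<mu> (x + a)))"
    unfolding cnj_sum sum_product by (intro sum.cong refl shift)
  also have "\<dots> = (\<Sum>a\<in>UNIV. autocorr_weight a * chi (a * \<mu>)
      * (\<Sum>x\<in>UNIV. chi (gold_linearized lam k a * x ^ 2 ^ k)))"
    unfolding nega_term_mult_cnj_shift sum_distrib_left by (rule sum.swap)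
  also have "\<dots> = (\<Sum>a\<in>UNIV. if gold_linearized lam k a = 0
      then of_nat (2 ^ n) * (autocorr_weight a * chi (a * \<mu>)) else 0)"
    unfolding frob sum_chi_mult by (rule sum.cong) (auto simp: mult_ac)
  also have "\<dots> = of_nat (2 ^ n) * (\<Sum>a\<in>{a. gold_linearized lam k a = 0}. autocorr_weight a * chi (a * \<mu>))"
    by (simp add: sum.If_cases sum_distrib_left)
  finally show ?thesis .
qed

lemma negabent_gold_iff_autocorr:
  "negabent n \<alpha> (\<lambda>x. tr n (lam * x ^ (2 ^ k + 1))) \<longleftrightarrow>
     (\<forall>\<mu>. (\<Sum>a\<in>{a. gold_linearized lam k a = 0}. autocorr_weight a * chi (a * \<mu>)) = 1)"
proof -
  let ?c = "1 / complex_of_real (sqrt (2 ^ n))"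
  have c: "?c * cnj ?c = 1 / of_nat (2 ^ n)"
    by (simp flip: of_real_mult)
  have "cmod (nega_transform n \<alpha> (\<lambda>x. tr n (lam * x ^ (2 ^ k + 1))) \<mu>) = 1 \<longleftrightarrow>
      (\<Sum>a\<in>{a. gold_linearized lam k a = 0}. autocorr_weight a * chi (a * \<mu>)) = 1" for \<mu>
  proof -
    let ?S = "\<Sum>x\<in>UNIV. nega_term \<mu> x"
    have "?c * ?S * cnj (?c * ?S) = ?c * cnj ?c * (?S * cnj ?S)"
      by (simp add: mult_ac)
    also have "\<dots> = (\<Sum>a\<in>{a. gold_linearized lam k a = 0}. autocorr_weight a * chi (a * \<mu>))"
      unfolding c nega_sum_mult_cnj by simp
    finally show ?thesis
      unfolding cmod_eq_1_iff nega_transform_gold by simp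
  qed
  then show ?thesis
    unfolding negabent_def by blast
qed

lemma autocorr_sum_eq_1_iff:
  "(\<forall>\<mu>. (\<Sum>a\<in>{a. gold_linearized lam k a = 0}. autocorr_weight a * chi (a * \<mu>)) = 1)
     \<longleftrightarrow> (\<forall>a. gold_linearized lam k a = 0 \<longrightarrow> a = 0)"
proof
  assume trivial: "\<forall>a. gold_linearized lam k a = 0 \<longrightarrow> a = 0"
  have "gold_linearized lam k 0 = 0"
    by (simp add: gold_linearized_def power_0_left)
  with trivial have "{a. gold_linearized lam k a = 0} = {0}" by blast
  then show "\<forall>\<mu>. (\<Sum>a\<in>{a. gold_linearized lam k a = 0}. autocorr_weight a * chi (a * \<mu>)) = 1"
    by (simp add: autocorr_weight_def power_0_left)
next
  assume sum_1: "\<forall>\<mu>. (\<Sum>a\<in>{a. gold_linearized lam k a = 0}. autocorr_weight a * chi (a * \<mu>)) = 1"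
  show "\<forall>a. gold_linearized lam k a = 0 \<longrightarrow> a = 0"
  proof (intro allI impI)
    fix b assume root: "gold_linearized lam k b = 0"
    have inversion: "of_nat (2 ^ n) * autocorr_weight b = (\<Sum>\<mu>\<in>UNIV. chi (b * \<mu>))"
      using sum_chi_inversion[where w = autocorr_weight and A = "{a. gold_linearized lam k a = 0}"]
        root sum_1 by simp
    have "autocorr_weight b \<noteq> 0"
      using chi_cases[of "lam * b ^ (2 ^ k + 1)"] by (auto simp: autocorr_weight_def)
    then show "b = 0"
      using inversion sum_chi_mult[of b] by (cases "b = 0") simp_all
  qed
qed

end

end

theorem theorem2:
  fixes n k :: nat and lam :: "'a::{field,finite}" and \<alpha> :: "nat \<Rightarrow> 'a"
  assumes "n \<ge> 1" and "k \<ge> 1"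
    and "card (UNIV :: 'a set) = 2 ^ n"
    and "self_dual_basis n \<alpha>"
    and "lam \<noteq> 0"
  shows "negabent n \<alpha> (\<lambda>x. tr n (lam * x ^ (2 ^ k + 1))) \<longleftrightarrow>
         \<not> (\<exists>v0 v1. v0 ^ (2 ^ gcd k n) \<noteq> v0 \<and> v1 = v0 ^ (2 ^ k) \<and>
                   lam = v0 ^ (2 ^ (2 * k) + 1) / (v0 + v1) ^ (2 ^ k + 1))"
proof -
  interpret self_dual_field n \<alpha>
    using assms(3,4) by unfold_locales
  have "negabent n \<alpha> (\<lambda>x. tr n (lam * x ^ (2 ^ k + 1))) \<longleftrightarrow>
      (\<forall>a. gold_linearized lam k a = 0 \<longrightarrow> a = 0)"
    using negabent_gold_iff_autocorr autocorr_sum_eq_1_iff by blast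
  also have "\<dots> \<longleftrightarrow> \<not> (\<exists>v0. v0 ^ 2 ^ gcd k n \<noteq> v0 \<and> lam = gold_param k v0)"
    using gold_linearized_nonzero_root_iff by blast
  finally show ?thesis
    unfolding gold_param_def by blast
qed

end
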